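(* Let $F \in S$ be a homogeneous form of degree $d$ and let $\alpha \in T_1$ be a linear form. Then $r(F) \geq \mathrm{al}(\alpha\circ F) - \mathrm{al}(\alpha^2\circ F)$.
   Context: $S=\mathbb{C}[x_1,\dots,x_n]$, $T=\mathbb{C}[\alpha_1,\dots,\alpha_n]$ acting on $S$ by $\alpha_i\mapsto\partial/\partial x_i$ (written $\Theta\circ F$). $\mathrm{al}(G)=\dim_{\mathbb{C}}\{\Theta\circ G:\Theta\in T\}$ is the apolar length (dimension of the space of all partial derivatives of all orders of $G$, including $G$; it is $0$ if $G=0$). $r(F)$ is the Waring rank: the least $r$ with $F=\sum_{i=1}^r c_i\ell_i^d$ for linear forms $\ell_i$ and scalars $c_i$. *)

theory Defs
  imports Complex_Main "HOL-Library.Function_Algebras"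
begin

(* Polynomials in n variables over C, represented by their coefficient function on
   exponent vectors (monomials) m :: nat => nat; variables are indexed by i < n. *)
type_synonym mono = "nat \<Rightarrow> nat"
type_synonym cpoly = "mono \<Rightarrow> complex"

definition supp :: "cpoly \<Rightarrow> mono set" where
  "supp p = {m. p m \<noteq> 0}"

definition is_poly :: "nat \<Rightarrow> cpoly \<Rightarrow> bool" where
  "is_poly n p \<longleftrightarrow> finite (supp p) \<and> (\<forall>m\<in>supp p. \<forall>i\<ge>n. m i = 0)"

definition homog :: "nat \<Rightarrow> nat \<Rightarrow> cpoly \<Rightarrow> bool" where
  "homog n d p \<longleftrightarrow> is_poly n p \<and> (\<forall>m\<in>supp p. (\<Sum>i<n. m i) = d)"

definition pmult :: "cpoly \<Rightarrow> cpoly \<Rightarrow> cpoly" where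
  "pmult p q = (\<lambda>m. \<Sum>(a,b)\<in>supp p \<times> supp q.
      if (\<lambda>i. a i + b i) = m then p a * q b else 0)"

definition pone :: cpoly where
  "pone = (\<lambda>m. if m = (\<lambda>_. 0) then 1 else 0)"

fun ppow :: "cpoly \<Rightarrow> nat \<Rightarrow> cpoly" where
  "ppow p 0 = pone"
| "ppow p (Suc k) = pmult p (ppow p k)"

definition pderiv_i :: "nat \<Rightarrow> cpoly \<Rightarrow> cpoly" where
  "pderiv_i i F = (\<lambda>m. of_nat (m i + 1) * F (m(i := m i + 1)))"

definition diffmono :: "nat \<Rightarrow> mono \<Rightarrow> cpoly \<Rightarrow> cpoly" where
  "diffmono n m F = foldr (\<lambda>i. pderiv_i i ^^ m i) [0..<n] F"

(* apolarity action Theta o F, Theta in T = C[alpha_1..alpha_n], alpha_i acting as d/dx_i *)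
definition apply_op :: "nat \<Rightarrow> cpoly \<Rightarrow> cpoly \<Rightarrow> cpoly" where
  "apply_op n \<Theta> F = (\<lambda>k. \<Sum>m\<in>supp \<Theta>. \<Theta> m * diffmono n m F k)"

definition cscale :: "complex \<Rightarrow> cpoly \<Rightarrow> cpoly" where
  "cscale c f = (\<lambda>x. c * f x)"

definition apolar_length :: "nat \<Rightarrow> cpoly \<Rightarrow> nat" where
  "apolar_length n G = vector_space.dim cscale {apply_op n \<Theta> G | \<Theta>. is_poly n \<Theta>}"

definition waring_rank :: "nat \<Rightarrow> nat \<Rightarrow> cpoly \<Rightarrow> nat" where
  "waring_rank n d F = (LEAST r. \<exists>c :: nat \<Rightarrow> complex. \<exists>l :: nat \<Rightarrow> cpoly.
      (\<forall>i<r. homog n 1 (l i)) \<and> F = (\<lambda>m. \<Sum>i<r. c i * ppow (l i) d m))"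

end

theory Submission
  imports Defs
begin

text \<open>Let \<open>F = \<Sum>i<r. c\<^sub>i l\<^sub>i\<^sup>d\<close> be a Waring decomposition and let \<open>D\<close> be
  the derivative in the direction of \<open>\<alpha>\<close>, so that \<open>\<alpha> \<circ> _\<close> and \<open>\<alpha>\<^sup>2 \<circ> _\<close> act as \<open>D\<close> and
  \<open>D\<^sup>2\<close>. Only the \<open>l\<^sub>i\<close> with \<open>D l\<^sub>i \<noteq> 0\<close> survive in \<open>G = D F\<close>, and every derivative
  of \<open>G\<close> lies in the span \<open>U\<close> of their powers \<open>l\<^sub>i\<^sup>k\<close>, \<open>k \<le> d - 1\<close>. Since
  \<open>D l\<^sub>i\<^sup>k\<^sup>+\<^sup>1\<close> is a nonzero multiple of \<open>l\<^sub>i\<^sup>k\<close>, the image \<open>D U\<close> contains all powers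
  below the top one, so the kernel of \<open>D\<close> on \<open>U\<close> has dimension at most the number of top
  powers \<open>l\<^sub>i\<^sup>d\<^sup>-\<^sup>1\<close>, hence at most \<open>r\<close>. Rank-nullity on the space of derivatives of
  \<open>G\<close>, whose image under \<open>D\<close> is the space of derivatives of \<open>D G\<close>, gives the bound.
  That the Waring rank is attained at all rests on every form being a sum of powers of linear
  forms, which follows from a roots-of-unity filter on binomial expansions.\<close>

section \<open>Linear algebra on coefficient functions\<close>

interpretation V: vector_space cscale
  by unfold_locales (auto simp: cscale_def algebra_simps)

interpretation VV: vector_space_pair cscale cscale ..

abbreviation clinear :: "(cpoly \<Rightarrow> cpoly) \<Rightarrow> bool" where
  "clinear \<equiv> Vector_Spaces.linear cscale cscale"

lemma cscale_apply: "cscale c f x = c * f x"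
  by (simp add: cscale_def)

lemma fun_sum_apply: "(\<Sum>x\<in>A. f x) (k::'b) = (\<Sum>x\<in>A. f x k)"
  by (induction A rule: infinite_finite_induct) auto

lemma clinearI:
  assumes "\<And>F G. f (F + G) = f F + f G" and "\<And>c F. f (cscale c F) = cscale c (f F)"
  shows "clinear f"
  using assms V.vector_space_axioms by (simp add: Vector_Spaces.linear_iff)

lemma clinear_funpow: "clinear f \<Longrightarrow> clinear (f ^^ k)"
  by (induction k) (auto simp: V.linear_id Vector_Spaces.linear_compose
      simp del: funpow.simps(2) simp add: funpow_Suc_right)

lemma clinear_foldr: "(\<And>i. i \<in> set xs \<Longrightarrow> clinear (f i)) \<Longrightarrow> clinear (foldr f xs)"
  by (induction xs) (auto simp: V.linear_id Vector_Spaces.linear_compose)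

lemma basis_of_finitely_spanned:
  assumes "finite T" "X \<subseteq> V.span T"
  obtains B where "B \<subseteq> X" "V.independent B" "X \<subseteq> V.span B" "card B = V.dim X" "finite B"
proof -
  obtain B where B: "B \<subseteq> X" "V.independent B" "X \<subseteq> V.span B" "card B = V.dim X"
    by (rule V.basis_exists)
  have "finite B" using V.independent_span_bound[OF assms(1) B(2)] B(1) assms(2) by auto
  thus ?thesis using B that by blast
qed

lemma dim_le_dim_of_finitely_spanned:
  assumes "finite T" "Y \<subseteq> V.span T" "X \<subseteq> V.span Y"
  shows "V.dim X \<le> V.dim Y"
proof -
  obtain B where B: "Y \<subseteq> V.span B" "card B = V.dim Y" "finite B"
    using basis_of_finitely_spanned[OF assms(1,2)] by blast
  have "X \<subseteq> V.span B" using assms(3) V.span_minimal[OF B(1) V.subspace_span] by blast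
  thus ?thesis using V.dim_le_card[OF _ B(3)] B(2) by simp
qed

lemma dim_Un_le_dim_add_card:
  assumes "finite B" "finite E"
  shows "V.dim (B \<union> E) \<le> V.dim B + card E"
proof -
  obtain Bb where Bb: "Bb \<subseteq> B" "V.independent Bb" "B \<subseteq> V.span Bb" "card Bb = V.dim B" "finite Bb"
    by (rule basis_of_finitely_spanned[OF assms(1) V.span_superset])
  have "B \<union> E \<subseteq> V.span (Bb \<union> E)"
    using Bb(3) V.span_mono[of Bb "Bb \<union> E"] V.span_superset[of "Bb \<union> E"] by blast
  hence "V.dim (B \<union> E) \<le> card (Bb \<union> E)" by (rule V.dim_le_card) (simp add: Bb(5) assms(2))
  also have "\<dots> \<le> V.dim B + card E" using card_Un_le[of Bb E] Bb(4) by simp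
  finally show ?thesis .
qed

lemma independent_scalars_zero:
  assumes "V.independent B" "finite B" "(\<Sum>y\<in>B. cscale (u y) y) = 0" "x \<in> B"
  shows "u x = 0"
  using assms(1) unfolding V.independent_explicit_finite_subsets
  using assms(2-4) by blast

lemma dim_le_dim_image_add_dim_kernel:
  assumes D: "clinear D" and T: "finite T" and WT: "W \<subseteq> V.span T" and W: "V.subspace W"
  shows "V.dim W \<le> V.dim (D ` W) + V.dim {x \<in> W. D x = 0}"
proof -
  let ?K = "{x \<in> W. D x = 0}"
  have "finite (D ` T)" using T by simp
  moreover have "D ` W \<subseteq> V.span (D ` T)"
    using WT by (auto simp: VV.linear_span_image[OF D])
  ultimately obtain C where C: "C \<subseteq> D ` W" "V.independent C" "D ` W \<subseteq> V.span C"
      "card C = V.dim (D ` W)" "finite C"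
    by (rule basis_of_finitely_spanned)
  have "\<forall>c\<in>C. \<exists>w. w \<in> W \<and> D w = c" using C(1) by blast
  from bchoice[OF this] obtain pre where pre: "\<And>c. c \<in> C \<Longrightarrow> pre c \<in> W \<and> D (pre c) = c"
    by blast
  have "?K \<subseteq> V.span T" using WT by blast
  then obtain Kb where Kb: "Kb \<subseteq> ?K" "V.independent Kb" "?K \<subseteq> V.span Kb" "card Kb = V.dim ?K" "finite Kb"
    by (rule basis_of_finitely_spanned[OF T])
  have "W \<subseteq> V.span (pre ` C \<union> Kb)"
  proof
    fix w assume w: "w \<in> W"
    then obtain u where u: "D w = (\<Sum>c\<in>C. cscale (u c) c)"
      using C(3) V.span_finite[OF C(5)] by blast
    define z where "z = (\<Sum>c\<in>C. cscale (u c) (pre c))"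
    have "z \<in> W" unfolding z_def using pre by (intro V.subspace_sum[OF W] V.subspace_scale[OF W]) auto
    moreover have "D z = D w"
      unfolding z_def u using pre by (simp add: VV.linear_sum[OF D] VV.linear_scale[OF D])
    ultimately have "w - z \<in> ?K"
      using w V.subspace_diff[OF W] VV.linear_diff[OF D] by auto
    hence "w - z \<in> V.span (pre ` C \<union> Kb)" using Kb(3) V.span_mono[of Kb "pre ` C \<union> Kb"] by blast
    moreover have "z \<in> V.span (pre ` C \<union> Kb)" unfolding z_def
      by (intro V.span_sum V.span_scale V.span_base) auto
    ultimately have "(w - z) + z \<in> V.span (pre ` C \<union> Kb)" by (rule V.span_add)
    thus "w \<in> V.span (pre ` C \<union> Kb)" by simp
  qed
  hence "V.dim W \<le> card (pre ` C \<union> Kb)" by (rule V.dim_le_card) (simp add: C(5) Kb(5))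
  also have "\<dots> \<le> card (pre ` C) + card Kb" by (rule card_Un_le)
  also have "\<dots> \<le> card C + card Kb" using card_image_le[OF C(5)] by simp
  finally show ?thesis using C(4) Kb(4) by simp
qed

lemma dim_kernel_add_dim_image_le:
  assumes D: "clinear D" and T: "finite T"
    and K: "K \<subseteq> V.span T" and DK: "\<And>x. x \<in> K \<Longrightarrow> D x = 0"
  shows "V.dim K + V.dim (D ` V.span T) \<le> V.dim T"
proof -
  obtain Kb where Kb: "Kb \<subseteq> K" "V.independent Kb" "K \<subseteq> V.span Kb" "card Kb = V.dim K" "finite Kb"
    by (rule basis_of_finitely_spanned[OF T K])
  have "finite (D ` T)" using T by simp
  moreover have "D ` V.span T \<subseteq> V.span (D ` T)" by (simp add: VV.linear_span_image[OF D])
  ultimately obtain C where C: "C \<subseteq> D ` V.span T" "V.independent C" "D ` V.span T \<subseteq> V.span C"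
      "card C = V.dim (D ` V.span T)" "finite C"
    by (rule basis_of_finitely_spanned)
  have "\<forall>c\<in>C. \<exists>x. x \<in> V.span T \<and> D x = c" using C(1) by blast
  from bchoice[OF this] obtain v where v: "\<And>c. c \<in> C \<Longrightarrow> v c \<in> V.span T \<and> D (v c) = c"
    by blast
  have inj: "inj_on v C" by (metis inj_onI v)
  have disj: "Kb \<inter> v ` C = {}"
    using v Kb(1) DK C(2) V.dependent_zero by fastforce
  have split: "(\<Sum>y\<in>Kb \<union> v ` C. g y) = (\<Sum>y\<in>Kb. g y) + (\<Sum>c\<in>C. g (v c))" for g :: "cpoly \<Rightarrow> cpoly"
    using disj inj Kb(5) C(5) by (simp add: sum.union_disjoint sum.reindex)
  have "V.independent (Kb \<union> v ` C)"
  proof (rule V.independent_if_scalars_zero)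
    show "finite (Kb \<union> v ` C)" using Kb(5) C(5) by simp
  next
    fix t x assume sum0: "(\<Sum>y\<in>Kb \<union> v ` C. cscale (t y) y) = 0" and x: "x \<in> Kb \<union> v ` C"
    have "(\<Sum>y\<in>Kb. cscale (t y) (D y)) = 0"
      using Kb(1) DK by (intro sum.neutral) (auto simp: V.scale_zero_right)
    hence "D (\<Sum>y\<in>Kb \<union> v ` C. cscale (t y) y) = (\<Sum>c\<in>C. cscale (t (v c)) c)"
      by (simp add: split VV.linear_add[OF D] VV.linear_sum[OF D] VV.linear_scale[OF D] v)
    hence "(\<Sum>c\<in>C. cscale (t (v c)) c) = 0" using sum0 VV.linear_0[OF D] by simp
    hence tC: "c \<in> C \<Longrightarrow> t (v c) = 0" for c
      using independent_scalars_zero[OF C(2,5), where u = "\<lambda>c. t (v c)"] by blast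
    hence "(\<Sum>y\<in>Kb. cscale (t y) y) = 0"
      using sum0 by (simp add: split)
    hence "y \<in> Kb \<Longrightarrow> t y = 0" for y
      using independent_scalars_zero[OF Kb(2,5), where u = t] by blast
    thus "t x = 0" using x tC by auto
  qed
  hence "card (Kb \<union> v ` C) = V.dim (Kb \<union> v ` C)" by (simp add: V.dim_eq_card_independent)
  also have "\<dots> \<le> V.dim T"
  proof (rule dim_le_dim_of_finitely_spanned[OF T])
    show "T \<subseteq> V.span T" by (rule V.span_superset)
    show "Kb \<union> v ` C \<subseteq> V.span T" using Kb(1) K v by blast
  qed
  finally show ?thesis
    using disj inj Kb(4,5) C(4,5) by (simp add: card_Un_disjoint card_image)
qed

lemma dim_le_dim_image_add_card:
  assumes D: "clinear D" and B: "finite B" and E: "finite E"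
    and W: "W \<subseteq> V.span (B \<union> E)" and BD: "B \<subseteq> D ` V.span (B \<union> E)"
  shows "V.dim W \<le> V.dim (D ` W) + card E"
proof -
  let ?T = "B \<union> E" and ?S = "V.span W"
  let ?K = "{x \<in> ?S. D x = 0}"
  have T: "finite ?T" using B E by simp
  have S: "?S \<subseteq> V.span ?T" using W V.span_minimal[of W "V.span ?T"] by simp
  have "V.dim W = V.dim ?S" by simp
  also have "\<dots> \<le> V.dim (D ` ?S) + V.dim ?K"
    by (rule dim_le_dim_image_add_dim_kernel[OF D T S]) simp
  also have "V.dim (D ` ?S) = V.dim (D ` W)"
    by (simp only: VV.linear_span_image[OF D, symmetric] V.dim_span)
  finally have rank_nullity: "V.dim W \<le> V.dim (D ` W) + V.dim ?K" .
  have kernel: "V.dim ?K + V.dim (D ` V.span ?T) \<le> V.dim ?T"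
  proof (rule dim_kernel_add_dim_image_le[OF D T])
    show "?K \<subseteq> V.span ?T" using S by blast
  qed simp
  have image: "V.dim B \<le> V.dim (D ` V.span ?T)"
  proof (rule dim_le_dim_of_finitely_spanned)
    show "finite (D ` ?T)" using T by simp
    show "D ` V.span ?T \<subseteq> V.span (D ` ?T)" by (simp add: VV.linear_span_image[OF D])
    show "B \<subseteq> V.span (D ` V.span ?T)" using BD V.span_superset by blast
  qed
  have "\<And>a b k c t d e :: nat. a \<le> b + k \<Longrightarrow> k + c \<le> t \<Longrightarrow> d \<le> c \<Longrightarrow> t \<le> d + e \<Longrightarrow> a \<le> b + e"
    by linarith
  from this[OF rank_nullity kernel image dim_Un_le_dim_add_card[OF B E]] show ?thesis .
qed

section \<open>Partial derivatives and the apolarity action\<close>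

lemma clinear_pderiv_i: "clinear (pderiv_i i)"
  by (rule clinearI) (auto simp: pderiv_i_def cscale_def fun_eq_iff algebra_simps)

lemma pderiv_i_commute: "pderiv_i i (pderiv_i j F) = pderiv_i j (pderiv_i i F)"
  by (cases "i = j") (auto simp: pderiv_i_def fun_eq_iff fun_upd_twist)

lemma pderiv_i_sum: "pderiv_i j (\<lambda>m. \<Sum>i\<in>A. f i m) = (\<lambda>m. \<Sum>i\<in>A. pderiv_i j (f i) m)"
  unfolding pderiv_i_def by (simp add: sum_distrib_left)

lemma pderiv_i_scale: "pderiv_i j (\<lambda>m. c * f m) = (\<lambda>m. c * pderiv_i j f m)"
  unfolding pderiv_i_def by (simp add: algebra_simps)

lemma clinear_diffmono: "clinear (diffmono n m)"
proof -
  have "clinear (foldr (\<lambda>i. pderiv_i i ^^ m i) [0..<n])"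
    by (rule clinear_foldr) (auto intro: clinear_funpow clinear_pderiv_i)
  thus ?thesis unfolding diffmono_def[abs_def] by (simp add: fun_eq_iff)
qed

lemma funpow_commute:
  assumes "\<And>x. f (g x) = g (f x)"
  shows "(f ^^ k) (g x) = g ((f ^^ k) x)"
  by (induction k) (auto simp: assms)

lemma foldr_funpow_commute:
  assumes "\<And>j x. f j (g x) = g (f j x)"
  shows "foldr (\<lambda>j. f j ^^ m j) xs (g x) = g (foldr (\<lambda>j. f j ^^ m j) xs x)"
  by (induction xs) (auto simp: funpow_commute assms)

lemma foldr_funpow_Suc_exponent:
  assumes "\<And>i j x. f i (f j x) = f j (f i x)" "i \<in> set xs" "distinct xs"
  shows "foldr (\<lambda>j. f j ^^ (m(i := Suc (m i))) j) xs x = f i (foldr (\<lambda>j. f j ^^ m j) xs x)"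
  using assms(2,3)
proof (induction xs)
  case (Cons j xs)
  show ?case
  proof (cases "j = i")
    case True
    with Cons have "i \<notin> set xs" by auto
    hence "foldr (\<lambda>j. f j ^^ (m(i := Suc (m i))) j) xs x = foldr (\<lambda>j. f j ^^ m j) xs x"
      by (intro foldr_cong) auto
    thus ?thesis using True by (simp add: funpow_commute assms(1))
  next
    case False
    with Cons show ?thesis by (simp add: funpow_commute assms(1))
  qed
qed simp

lemma diffmono_pderiv_i_commute: "diffmono n m (pderiv_i i F) = pderiv_i i (diffmono n m F)"
  unfolding diffmono_def by (rule foldr_funpow_commute) (rule pderiv_i_commute)

lemma diffmono_Suc_exponent:
  "i < n \<Longrightarrow> diffmono n (m(i := Suc (m i))) F = pderiv_i i (diffmono n m F)"
  unfolding diffmono_def by (rule foldr_funpow_Suc_exponent) (auto intro: pderiv_i_commute)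

lemma diffmono_zero: "diffmono n (\<lambda>_. 0) F = F"
  unfolding diffmono_def by (induction n) auto

lemma apply_op_eq_sum: "apply_op n \<Theta> H = (\<Sum>m\<in>supp \<Theta>. cscale (\<Theta> m) (diffmono n m H))"
  by (simp add: apply_op_def fun_eq_iff fun_sum_apply cscale_apply)

lemma apply_op_sum_superset:
  assumes "finite S" "supp \<Theta> \<subseteq> S"
  shows "apply_op n \<Theta> F = (\<lambda>k. \<Sum>m\<in>S. \<Theta> m * diffmono n m F k)"
  unfolding apply_op_def
  by (rule ext, rule sum.mono_neutral_left) (use assms in \<open>auto simp: supp_def\<close>)

lemma clinear_apply_op: "clinear (apply_op n \<Theta>)"
proof (rule clinearI)
  have D: "clinear (diffmono n m)" for m by (rule clinear_diffmono)
  show "apply_op n \<Theta> (F + G) = apply_op n \<Theta> F + apply_op n \<Theta> G" for F G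
    by (simp add: apply_op_eq_sum VV.linear_add[OF D] V.scale_right_distrib sum.distrib)
  show "apply_op n \<Theta> (cscale c F) = cscale c (apply_op n \<Theta> F)" for c F
    by (simp add: apply_op_eq_sum VV.linear_scale[OF D] V.scale_sum_right mult.commute)
qed

lemma supp_pone: "supp pone = {\<lambda>_. 0}"
  by (auto simp: supp_def pone_def)

lemma apply_op_pone: "apply_op n pone F = F"
  unfolding apply_op_def supp_pone by (simp add: diffmono_zero pone_def)

section \<open>Linear forms\<close>

definition unit_mono :: "nat \<Rightarrow> mono" where
  "unit_mono i = (\<lambda>k. if k = i then 1 else 0)"

definition lin_coeffs :: "cpoly \<Rightarrow> nat \<Rightarrow> complex" where
  "lin_coeffs l = (\<lambda>i. l (unit_mono i))"

definition linmult :: "nat \<Rightarrow> (nat \<Rightarrow> complex) \<Rightarrow> cpoly \<Rightarrow> cpoly" where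
  "linmult n a P = (\<lambda>m. \<Sum>i<n. a i * (if 0 < m i then P (m(i := m i - 1)) else 0))"

definition linpow :: "nat \<Rightarrow> (nat \<Rightarrow> complex) \<Rightarrow> nat \<Rightarrow> cpoly" where
  "linpow n a k = (linmult n a ^^ k) pone"

definition dirderiv :: "nat \<Rightarrow> (nat \<Rightarrow> complex) \<Rightarrow> cpoly \<Rightarrow> cpoly" where
  "dirderiv n a H = (\<lambda>m. \<Sum>i<n. a i * pderiv_i i H m)"

lemma linpow_0 [simp]: "linpow n a 0 = pone"
  by (simp add: linpow_def)

lemma linpow_Suc: "linpow n a (Suc k) = linmult n a (linpow n a k)"
  by (simp add: linpow_def)

lemma clinear_linmult: "clinear (linmult n a)"
  by (rule clinearI)
    (auto simp: linmult_def cscale_def fun_eq_iff sum.distrib[symmetric] sum_distrib_left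
      algebra_simps intro!: sum.cong)

lemma clinear_dirderiv: "clinear (dirderiv n a)"
  by (rule clinearI)
    (auto simp: dirderiv_def pderiv_i_def cscale_def fun_eq_iff algebra_simps sum.distrib
      sum_distrib_left)

lemma linmult_commute: "linmult n a (linmult n b P) = linmult n b (linmult n a P)"
proof (rule ext)
  fix m
  have "linmult n a (linmult n b P) m = (\<Sum>i<n. \<Sum>j<n. a i * b j *
     (if 0 < m i \<and> 0 < (m(i := m i - 1)) j then P ((m(i := m i - 1))(j := (m(i := m i - 1)) j - 1)) else 0))"
    unfolding linmult_def by (auto simp: sum_distrib_left algebra_simps intro!: sum.cong)
  also have "\<dots> = (\<Sum>j<n. \<Sum>i<n. a i * b j *
     (if 0 < m j \<and> 0 < (m(j := m j - 1)) i then P ((m(j := m j - 1))(i := (m(j := m j - 1)) i - 1)) else 0))"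
    by (subst sum.swap) (auto intro!: sum.cong simp: fun_upd_twist)
  also have "\<dots> = linmult n b (linmult n a P) m"
    unfolding linmult_def by (auto simp: sum_distrib_left algebra_simps intro!: sum.cong)
  finally show "linmult n a (linmult n b P) m = linmult n b (linmult n a P) m" .
qed

lemma linmult_coeffs_add_scale:
  "linmult n (\<lambda>i. a i + t * b i) X = linmult n a X + cscale t (linmult n b X)"
  unfolding linmult_def by (auto simp: fun_eq_iff algebra_simps sum.distrib sum_distrib_left cscale_def)

lemma linmult_cong: "(\<And>i. i < n \<Longrightarrow> a i = b i) \<Longrightarrow> linmult n a = linmult n b"
  unfolding linmult_def by (intro ext sum.cong) auto

lemma linpow_cong: "(\<And>i. i < n \<Longrightarrow> a i = b i) \<Longrightarrow> linpow n a k = linpow n b k"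
  unfolding linpow_def using linmult_cong by metis

lemma pderiv_i_linmult:
  "pderiv_i j (linmult n a P) = cscale (if j < n then a j else 0) P + linmult n a (pderiv_i j P)"
proof (rule ext)
  fix m
  let ?g = "\<lambda>i. a i * (if 0 < m i then pderiv_i j P (m(i := m i - 1)) else 0)"
  have "pderiv_i j (linmult n a P) m = (\<Sum>i<n. of_nat (m j + 1) * (a i *
      (if 0 < (m(j := m j + 1)) i then P ((m(j := m j + 1))(i := (m(j := m j + 1)) i - 1)) else 0)))"
    unfolding pderiv_i_def linmult_def by (simp add: sum_distrib_left)
  also have "\<dots> = (\<Sum>i<n. (if i = j then a j * P m else 0) + ?g i)"
  proof (rule sum.cong[OF refl])
    fix i
    show "of_nat (m j + 1) * (a i *
      (if 0 < (m(j := m j + 1)) i then P ((m(j := m j + 1))(i := (m(j := m j + 1)) i - 1)) else 0))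
      = (if i = j then a j * P m else 0) + ?g i"
      by (cases "i = j"; cases "m j")
        (auto simp: pderiv_i_def algebra_simps fun_upd_idem fun_upd_twist)
  qed
  also have "\<dots> = (if j < n then a j else 0) * P m + linmult n a (pderiv_i j P) m"
    by (simp add: sum.distrib linmult_def)
  finally show "pderiv_i j (linmult n a P) m = (cscale (if j < n then a j else 0) P + linmult n a (pderiv_i j P)) m"
    by (simp add: cscale_def)
qed

lemma pderiv_i_pone: "pderiv_i j pone = 0"
  by (auto simp: pderiv_i_def pone_def fun_eq_iff dest: fun_cong[of _ _ j])

lemma pderiv_i_linpow:
  "pderiv_i j (linpow n a k) = cscale (of_nat k * (if j < n then a j else 0)) (linpow n a (k - 1))"
proof (induction k)
  case 0 thus ?case by (auto simp: pderiv_i_pone fun_eq_iff)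
next
  case (Suc k)
  have L: "clinear (linmult n a)" by (rule clinear_linmult)
  let ?a = "if j < n then a j else 0"
  have "pderiv_i j (linpow n a (Suc k))
      = cscale ?a (linpow n a k) + linmult n a (cscale (of_nat k * ?a) (linpow n a (k - 1)))"
    by (simp only: linpow_Suc pderiv_i_linmult Suc.IH)
  also have "linmult n a (cscale (of_nat k * ?a) (linpow n a (k - 1))) = cscale (of_nat k * ?a) (linpow n a k)"
    by (cases k) (auto simp: VV.linear_scale[OF L] VV.linear_0[OF L] linpow_Suc V.scale_zero_left)
  finally show ?case by (auto simp: cscale_def fun_eq_iff algebra_simps)
qed

lemma dirderiv_linpow:
  "dirderiv n b (linpow n a k) = cscale (of_nat k * (\<Sum>j<n. b j * a j)) (linpow n a (k - 1))"
  by (auto simp: dirderiv_def pderiv_i_linpow cscale_def fun_eq_iff sum_distrib_left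
      sum_distrib_right algebra_simps)

lemma pderiv_i_dirderiv_commute: "pderiv_i j (dirderiv n a H) = dirderiv n a (pderiv_i j H)"
  unfolding dirderiv_def pderiv_i_sum pderiv_i_scale by (simp add: pderiv_i_commute)

lemma diffmono_dirderiv_commute: "diffmono n m (dirderiv n a H) = dirderiv n a (diffmono n m H)"
  unfolding diffmono_def by (rule foldr_funpow_commute) (rule pderiv_i_dirderiv_commute)

lemma apply_op_dirderiv_commute: "apply_op n \<Theta> (dirderiv n a H) = dirderiv n a (apply_op n \<Theta> H)"
  by (simp add: apply_op_eq_sum diffmono_dirderiv_commute VV.linear_sum[OF clinear_dirderiv]
      VV.linear_scale[OF clinear_dirderiv])

lemma inj_Suc_upd: "inj (\<lambda>b::mono. b(i := Suc (b i)))"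
  by (rule injI) (metis Suc_inject fun_upd_eqD fun_upd_idem_iff fun_upd_same fun_upd_upd)

lemma supp_linmult_subset:
  "supp (linmult n a P) \<subseteq> (\<lambda>(i,b). b(i := Suc (b i))) ` ({..<n} \<times> supp P)"
proof
  fix m assume m: "m \<in> supp (linmult n a P)"
  have "\<exists>i<n. 0 < m i \<and> P (m(i := m i - 1)) \<noteq> 0"
  proof (rule ccontr)
    assume "\<not> ?thesis"
    hence "linmult n a P m = 0" unfolding linmult_def by (intro sum.neutral) auto
    thus False using m by (simp add: supp_def)
  qed
  then obtain i where i: "i < n" "0 < m i" "P (m(i := m i - 1)) \<noteq> 0" by blast
  hence "m = (m(i := m i - 1))(i := Suc ((m(i := m i - 1)) i))" by auto
  moreover have "(i, m(i := m i - 1)) \<in> {..<n} \<times> supp P" using i by (simp add: supp_def)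
  ultimately show "m \<in> (\<lambda>(i,b). b(i := Suc (b i))) ` ({..<n} \<times> supp P)"
    by (metis (no_types, lifting) case_prod_conv image_eqI)
qed

lemma finite_supp_linmult: "finite (supp P) \<Longrightarrow> finite (supp (linmult n a P))"
  by (rule finite_subset[OF supp_linmult_subset]) auto

lemma finite_supp_linpow: "finite (supp (linpow n a k))"
  by (induction k) (auto simp: linpow_Suc supp_pone finite_supp_linmult)

lemma apply_op_linmult:
  assumes fin: "finite (supp \<Psi>)"
  shows "apply_op n (linmult n a \<Psi>) H = apply_op n \<Psi> (dirderiv n a H)"
proof (rule ext)
  fix k
  define S where "S = (\<lambda>(i,b). b(i := Suc (b i))) ` ({..<n} \<times> supp \<Psi>)"
  have finS: "finite S" using fin by (auto simp: S_def)
  have shift: "(\<Sum>m\<in>S. (if 0 < m i then \<Psi> (m(i := m i - 1)) * diffmono n m H k else 0))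
      = (\<Sum>b\<in>supp \<Psi>. \<Psi> b * diffmono n (b(i := Suc (b i))) H k)" if i: "i < n" for i
  proof -
    let ?u = "\<lambda>b::mono. b(i := Suc (b i))"
    have "(\<Sum>b\<in>supp \<Psi>. \<Psi> b * diffmono n (?u b) H k)
        = (\<Sum>m\<in>?u ` supp \<Psi>. (if 0 < m i then \<Psi> (m(i := m i - 1)) * diffmono n m H k else 0))"
      by (subst sum.reindex) (auto intro: inj_on_subset[OF inj_Suc_upd])
    also have "\<dots> = (\<Sum>m\<in>S. (if 0 < m i then \<Psi> (m(i := m i - 1)) * diffmono n m H k else 0))"
    proof (rule sum.mono_neutral_left[OF finS])
      show "?u ` supp \<Psi> \<subseteq> S" using i by (auto simp: S_def)
      show "\<forall>m\<in>S - ?u ` supp \<Psi>. (if 0 < m i then \<Psi> (m(i := m i - 1)) * diffmono n m H k else 0) = 0"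
      proof
        fix m assume m: "m \<in> S - ?u ` supp \<Psi>"
        show "(if 0 < m i then \<Psi> (m(i := m i - 1)) * diffmono n m H k else 0) = 0"
        proof (cases "0 < m i")
          case True
          hence "m = ?u (m(i := m i - 1))" by auto
          hence "m(i := m i - 1) \<notin> supp \<Psi>" using m by blast
          thus ?thesis by (auto simp: supp_def)
        qed auto
      qed
    qed
    finally show ?thesis ..
  qed
  have "apply_op n (linmult n a \<Psi>) H k = (\<Sum>m\<in>S. linmult n a \<Psi> m * diffmono n m H k)"
    using apply_op_sum_superset[OF finS supp_linmult_subset[of n a \<Psi>, folded S_def]] by simp
  also have "\<dots> = (\<Sum>i<n. a i * (\<Sum>m\<in>S. (if 0 < m i then \<Psi> (m(i := m i - 1)) * diffmono n m H k else 0)))"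
    unfolding linmult_def sum_distrib_right
    by (subst sum.swap) (auto simp: sum_distrib_left algebra_simps intro!: sum.cong)
  also have "\<dots> = (\<Sum>i<n. a i * (\<Sum>b\<in>supp \<Psi>. \<Psi> b * diffmono n b (pderiv_i i H) k))"
    by (auto simp: shift diffmono_Suc_exponent diffmono_pderiv_i_commute intro!: sum.cong)
  also have "\<dots> = (\<Sum>b\<in>supp \<Psi>. \<Psi> b * dirderiv n a (diffmono n b H) k)"
    unfolding dirderiv_def
    by (auto simp: sum_distrib_left algebra_simps diffmono_pderiv_i_commute intro: sum.swap)
  also have "\<dots> = apply_op n \<Psi> (dirderiv n a H) k"
    by (simp add: apply_op_def diffmono_dirderiv_commute)
  finally show "apply_op n (linmult n a \<Psi>) H k = apply_op n \<Psi> (dirderiv n a H) k" .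
qed

lemma finite_supp_homog: "homog n d p \<Longrightarrow> finite (supp p)"
  by (simp add: homog_def is_poly_def)

lemma inj_unit_mono: "inj unit_mono"
  by (rule injI) (metis unit_mono_def one_neq_zero)

lemma supp_homog_1:
  assumes "homog n 1 \<alpha>" "m \<in> supp \<alpha>"
  shows "\<exists>i<n. m = unit_mono i"
proof -
  have outside: "\<forall>i\<ge>n. m i = 0" and total: "(\<Sum>i<n. m i) = 1"
    using assms by (auto simp: homog_def is_poly_def)
  then obtain i where i: "i < n" "m i \<noteq> 0" by (metis lessThan_iff sum.neutral zero_neq_one)
  have split: "m i + (\<Sum>j\<in>{..<n} - {i}. m j) = 1"
    using i total by (simp add: sum.remove)
  hence "m i = 1" using i(2) by arith
  moreover have "(\<Sum>j\<in>{..<n} - {i}. m j) = 0" using split i(2) by arith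
  hence "\<forall>j\<in>{..<n} - {i}. m j = 0" by simp
  ultimately have "m = unit_mono i"
    using outside by (auto simp: unit_mono_def fun_eq_iff) (metis Diff_iff lessThan_iff not_le singletonD)
  thus ?thesis using i by auto
qed

lemma unit_mono_add_eq_iff:
  "((\<lambda>k. unit_mono i k + c k) = m) \<longleftrightarrow> (0 < m i \<and> c = m(i := m i - 1))"
  by (auto simp: unit_mono_def fun_eq_iff split: if_splits)

lemma pmult_linear_form:
  assumes \<alpha>: "homog n 1 \<alpha>" and fin: "finite (supp X)"
  shows "pmult \<alpha> X = linmult n (lin_coeffs \<alpha>) X"
proof (rule ext)
  fix m
  let ?A = "unit_mono ` {..<n}"
  let ?f = "\<lambda>(b,c). if (\<lambda>i. b i + c i) = m then \<alpha> b * X c else 0"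
  have "supp \<alpha> \<subseteq> ?A" using supp_homog_1[OF \<alpha>] by blast
  hence "pmult \<alpha> X m = (\<Sum>p\<in>?A \<times> supp X. ?f p)"
    unfolding pmult_def
    by (intro sum.mono_neutral_left) (use fin in \<open>auto simp: supp_def split: if_splits\<close>)
  also have "\<dots> = (\<Sum>i<n. \<Sum>c\<in>supp X. ?f (unit_mono i, c))"
    by (simp add: sum.cartesian_product[symmetric] sum.reindex inj_on_subset[OF inj_unit_mono])
  also have "\<dots> = (\<Sum>i<n. lin_coeffs \<alpha> i * (if 0 < m i then X (m(i := m i - 1)) else 0))"
  proof (rule sum.cong[OF refl])
    fix i
    have "(\<Sum>c\<in>supp X. ?f (unit_mono i, c))
        = (\<Sum>c\<in>supp X. if c = m(i := m i - 1) then (if 0 < m i then \<alpha> (unit_mono i) * X c else 0) else 0)"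
      by (rule sum.cong) (auto simp: unit_mono_add_eq_iff)
    also have "\<dots> = lin_coeffs \<alpha> i * (if 0 < m i then X (m(i := m i - 1)) else 0)"
      using fin by (auto simp: sum.delta lin_coeffs_def supp_def)
    finally show "(\<Sum>c\<in>supp X. ?f (unit_mono i, c))
        = lin_coeffs \<alpha> i * (if 0 < m i then X (m(i := m i - 1)) else 0)" .
  qed
  also have "\<dots> = linmult n (lin_coeffs \<alpha>) X m" by (simp add: linmult_def)
  finally show "pmult \<alpha> X m = linmult n (lin_coeffs \<alpha>) X m" .
qed

lemma ppow_linear_form: "homog n 1 \<alpha> \<Longrightarrow> ppow \<alpha> k = linpow n (lin_coeffs \<alpha>) k"
  by (induction k) (auto simp: linpow_Suc pmult_linear_form finite_supp_linpow)

lemma pmult_pone: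
  assumes "finite (supp \<alpha>)"
  shows "pmult \<alpha> pone = \<alpha>"
proof (rule ext)
  fix m
  have "pmult \<alpha> pone m = (\<Sum>b\<in>supp \<alpha>. if b = m then \<alpha> b else 0)"
    unfolding pmult_def supp_pone
    by (auto simp: pone_def sum.cartesian_product[symmetric] intro!: sum.cong)
  also have "\<dots> = \<alpha> m" using assms by (simp add: sum.delta' supp_def)
  finally show "pmult \<alpha> pone m = \<alpha> m" .
qed

lemma linear_form_eq_linmult: "homog n 1 \<alpha> \<Longrightarrow> \<alpha> = linmult n (lin_coeffs \<alpha>) pone"
  using pmult_linear_form[of n \<alpha> pone] pmult_pone[OF finite_supp_homog] by (simp add: supp_pone)

lemma apply_op_linear_form:
  assumes "homog n 1 \<alpha>"
  shows "apply_op n \<alpha> H = dirderiv n (lin_coeffs \<alpha>) H"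
  by (subst linear_form_eq_linmult[OF assms])
    (simp add: apply_op_linmult supp_pone apply_op_pone)

lemma apply_op_linear_form_square:
  assumes "homog n 1 \<alpha>"
  shows "apply_op n (ppow \<alpha> 2) H = dirderiv n (lin_coeffs \<alpha>) (dirderiv n (lin_coeffs \<alpha>) H)"
proof -
  have "ppow \<alpha> 2 = linmult n (lin_coeffs \<alpha>) (linmult n (lin_coeffs \<alpha>) pone)"
    by (simp only: ppow_linear_form[OF assms] numeral_2_eq_2 linpow_Suc linpow_0)
  thus ?thesis by (simp add: apply_op_linmult finite_supp_linmult supp_pone apply_op_pone)
qed

lemma lin_coeffs_linmult_pone:
  assumes "i < n"
  shows "lin_coeffs (linmult n a pone) i = a i"
proof -
  have "lin_coeffs (linmult n a pone) i = (\<Sum>j<n. if j = i then a j else 0)"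
    unfolding lin_coeffs_def linmult_def
    by (rule sum.cong) (auto simp: unit_mono_def pone_def fun_eq_iff)
  thus ?thesis using assms by simp
qed

lemma homog_linmult_pone: "homog n 1 (linmult n a pone)"
proof -
  have supp: "supp (linmult n a pone) \<subseteq> unit_mono ` {..<n}"
  proof
    fix m assume "m \<in> supp (linmult n a pone)"
    then obtain i where "i < n" "m = (\<lambda>_. 0)(i := Suc 0)"
      using supp_linmult_subset[of n a pone] by (auto simp: supp_pone)
    thus "m \<in> unit_mono ` {..<n}"
      by (intro image_eqI[of _ _ i]) (auto simp: unit_mono_def fun_eq_iff)
  qed
  have "(\<Sum>j<n. unit_mono i j) = 1" if "i < n" for i
    using that by (simp add: unit_mono_def)
  thus ?thesis
    using supp finite_supp_linmult[of pone n a]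
    by (fastforce simp: homog_def is_poly_def supp_pone unit_mono_def)
qed

lemma ppow_linmult_pone: "ppow (linmult n a pone) d = linpow n a d"
  by (metis ppow_linear_form[OF homog_linmult_pone] linpow_cong lin_coeffs_linmult_pone)

section \<open>Forms as sums of powers of linear forms\<close>

lemma funpow_binomial_commuting:
  assumes A: "clinear A" and B: "clinear B" and comm: "\<And>X. A (B X) = B (A X)"
  shows "((\<lambda>X. A X + cscale t (B X)) ^^ d) X =
     (\<Sum>j\<le>d. cscale (of_nat (d choose j) * t ^ j) ((B ^^ j) ((A ^^ (d - j)) X)))"
proof (induction d arbitrary: X)
  case 0 thus ?case by (simp add: V.scale_one)
next
  case (Suc d)
  let ?T = "\<lambda>X. A X + cscale t (B X)"
  let ?V = "\<lambda>j. (B ^^ j) ((A ^^ (Suc d - j)) X)"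
  let ?c = "\<lambda>D j. of_nat (D choose j) * t ^ j :: complex"
  have AB: "(A ^^ k) (B Y) = B ((A ^^ k) Y)" for k Y by (rule funpow_commute) (rule comm)
  have "(?T ^^ Suc d) X = (?T ^^ d) (?T X)" by (simp add: funpow_Suc_right del: funpow.simps)
  also have "\<dots> = (\<Sum>j\<le>d. cscale (?c d j) ((B ^^ j) ((A ^^ (d - j)) (A X + cscale t (B X)))))"
    by (rule Suc.IH)
  also have "\<dots> = (\<Sum>j\<le>d. cscale (?c d j) (?V j) + cscale (?c d j * t) (?V (Suc j)))"
  proof (rule sum.cong[OF refl])
    fix j assume j: "j \<in> {..d}"
    have L: "clinear ((B ^^ j) \<circ> (A ^^ (d - j)))"
      by (rule Vector_Spaces.linear_compose[OF clinear_funpow[OF A] clinear_funpow[OF B]])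
    have "((B ^^ j) \<circ> (A ^^ (d - j))) (A X) = ?V j"
      using j by (simp add: Suc_diff_le funpow_Suc_right del: funpow.simps)
    moreover have "((B ^^ j) \<circ> (A ^^ (d - j))) (B X) = ?V (Suc j)"
      using j by (simp add: AB funpow_Suc_right del: funpow.simps)
    ultimately show "cscale (?c d j) ((B ^^ j) ((A ^^ (d - j)) (A X + cscale t (B X))))
        = cscale (?c d j) (?V j) + cscale (?c d j * t) (?V (Suc j))"
      using VV.linear_add[OF L] VV.linear_scale[OF L]
      by (simp add: V.scale_right_distrib V.scale_scale del: funpow.simps)
  qed
  also have "\<dots> = (\<Sum>j\<le>d. cscale (?c d j) (?V j)) + (\<Sum>j\<le>d. cscale (?c d j * t) (?V (Suc j)))"
    by (rule sum.distrib)
  also have "(\<Sum>j\<le>d. cscale (?c d j) (?V j)) = (\<Sum>j\<le>Suc d. cscale (?c d j) (?V j))"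
    by (simp add: V.scale_zero_left)
  also have "\<dots> = cscale (?c d 0) (?V 0) + (\<Sum>j\<le>d. cscale (?c d (Suc j)) (?V (Suc j)))"
    by (rule sum.atMost_Suc_shift)
  also have "\<dots> + (\<Sum>j\<le>d. cscale (?c d j * t) (?V (Suc j)))
      = cscale (?c (Suc d) 0) (?V 0) + (\<Sum>j\<le>d. cscale (?c (Suc d) (Suc j)) (?V (Suc j)))"
    by (simp add: fun_eq_iff fun_sum_apply cscale_apply sum.distrib[symmetric] algebra_simps)
  also have "\<dots> = (\<Sum>j\<le>Suc d. cscale (?c (Suc d) j) (?V j))"
    by (rule sum.atMost_Suc_shift[symmetric])
  finally show ?case .
qed

lemma linpow_binomial:
  "linpow n (\<lambda>i. a i + t * b i) d =
     (\<Sum>j\<le>d. cscale (of_nat (d choose j) * t ^ j) ((linmult n b ^^ j) (linpow n a (d - j))))"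
proof -
  have "linmult n (\<lambda>i. a i + t * b i) = (\<lambda>X. linmult n a X + cscale t (linmult n b X))"
    by (rule ext) (rule linmult_coeffs_add_scale)
  thus ?thesis unfolding linpow_def
    by (simp add: funpow_binomial_commuting clinear_linmult linmult_commute)
qed

lemma root_of_unity_pow_eq_1_iff:
  assumes N: "0 < N"
  shows "cis (2 * pi / real N) ^ p = 1 \<longleftrightarrow> N dvd p"
proof
  assume "cis (2 * pi / real N) ^ p = 1"
  hence "cos (real p * (2 * pi / real N)) = 1" by (simp add: DeMoivre complex_eq_iff)
  then obtain k :: int where "real p * (2 * pi / real N) = of_int k * 2 * pi"
    by (auto simp: cos_one_2pi_int)
  hence "real p = of_int k * real N" using N by (simp add: field_simps)
  hence "int p = k * int N" by (metis of_int_eq_iff of_int_mult of_int_of_nat_eq)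
  thus "N dvd p" by (metis dvd_triv_right int_dvd_int_iff)
next
  assume "N dvd p"
  then obtain q where "p = N * q" by blast
  thus "cis (2 * pi / real N) ^ p = 1" using N by (simp add: power_mult DeMoivre)
qed

lemma root_of_unity_power_sum:
  assumes N: "0 < N" and j: "j < N" and k: "k < N"
  shows "(\<Sum>s<N. (cis (2 * pi / real N) ^ s) ^ (N - k + j)) = (if j = k then of_nat N else 0)"
proof -
  let ?z = "cis (2 * pi / real N) ^ (N - k + j)"
  have sum: "(\<Sum>s<N. (cis (2 * pi / real N) ^ s) ^ (N - k + j)) = (\<Sum>s<N. ?z ^ s)"
    by (simp add: power_mult[symmetric] mult.commute)
  have "N dvd N - k + j \<longleftrightarrow> j = k"
  proof (cases "j < k")
    case True
    thus ?thesis using k nat_dvd_not_less[of "N - k + j" N] by auto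
  next
    case False
    hence "N - k + j = N + (j - k)" using k by simp
    hence "N dvd N - k + j \<longleftrightarrow> N dvd j - k" by (simp add: dvd_add_right_iff)
    also have "\<dots> \<longleftrightarrow> j - k = 0" using j nat_dvd_not_less[of "j - k" N] by (cases "k < j") auto
    finally show ?thesis using False by auto
  qed
  hence z1: "?z = 1 \<longleftrightarrow> j = k" by (simp add: root_of_unity_pow_eq_1_iff[OF N])
  have "?z ^ N = 1" by (simp add: power_mult[symmetric] root_of_unity_pow_eq_1_iff[OF N])
  thus ?thesis using sum z1 by (auto simp: geometric_sum)
qed

definition linpow_span :: "nat \<Rightarrow> nat \<Rightarrow> cpoly set" where
  "linpow_span n d = V.span (range (\<lambda>a. linpow n a d))"

text \<open>With \<open>w\<close> a primitive \<open>(d + 1)\<close>-th root of unity, averaging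
  \<open>w\<^sup>-\<^sup>k\<^sup>s \<cdot> (a + w\<^sup>s b)\<^sup>d\<close> over \<open>s\<close> isolates the binomial term
  \<open>a\<^sup>d\<^sup>-\<^sup>k b\<^sup>k\<close>.\<close>

lemma linmult_funpow_linpow_in_span:
  "(linmult n b ^^ k) (linpow n a e) \<in> linpow_span n (e + k)"
proof -
  define d where "d = e + k"
  define N where "N = Suc d"
  define w where "w = cis (2 * pi / real N)"
  define Y where "Y = (\<lambda>j. (linmult n b ^^ j) (linpow n a (d - j)))"
  define W where "W = (\<Sum>s<N. cscale ((w ^ s) ^ (N - k)) (linpow n (\<lambda>i. a i + w ^ s * b i) d))"
  have WS: "W \<in> linpow_span n d" unfolding W_def linpow_span_def
    by (intro V.span_sum V.span_scale V.span_base) auto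
  have "W = cscale (of_nat (d choose k) * of_nat N) (Y k)"
  proof (rule ext)
    fix x
    have "W x = (\<Sum>s<N. (w ^ s) ^ (N - k) * (\<Sum>j\<le>d. of_nat (d choose j) * (w ^ s) ^ j * Y j x))"
      unfolding W_def linpow_binomial by (simp add: fun_sum_apply cscale_apply Y_def)
    also have "\<dots> = (\<Sum>s<N. \<Sum>j\<le>d. of_nat (d choose j) * Y j x * (w ^ s) ^ (N - k + j))"
      by (simp add: sum_distrib_left power_add algebra_simps)
    also have "\<dots> = (\<Sum>j\<le>d. of_nat (d choose j) * Y j x * (\<Sum>s<N. (w ^ s) ^ (N - k + j)))"
      by (subst sum.swap) (simp add: sum_distrib_left)
    also have "\<dots> = (\<Sum>j\<le>d. if j = k then of_nat (d choose k) * Y k x * of_nat N else 0)"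
    proof (rule sum.cong[OF refl])
      fix j assume "j \<in> {..d}"
      hence "(\<Sum>s<N. (w ^ s) ^ (N - k + j)) = (if j = k then of_nat N else 0)"
        unfolding w_def by (intro root_of_unity_power_sum) (auto simp: N_def d_def)
      thus "of_nat (d choose j) * Y j x * (\<Sum>s<N. (w ^ s) ^ (N - k + j)) =
          (if j = k then of_nat (d choose k) * Y k x * of_nat N else 0)" by simp
    qed
    also have "\<dots> = of_nat (d choose k) * of_nat N * Y k x" by (simp add: d_def)
    finally show "W x = cscale (of_nat (d choose k) * of_nat N) (Y k) x" by (simp add: cscale_apply)
  qed
  moreover have "of_nat (d choose k) * of_nat N \<noteq> (0::complex)"
    unfolding N_def d_def by (simp only: of_nat_mult[symmetric] of_nat_eq_0_iff) simp
  ultimately have "Y k = cscale (1 / (of_nat (d choose k) * of_nat N)) W"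
    by (simp add: fun_eq_iff cscale_apply)
  hence "Y k \<in> linpow_span n d" using WS unfolding linpow_span_def by (simp add: V.span_scale)
  thus ?thesis by (simp add: Y_def d_def)
qed

definition monomial :: "mono \<Rightarrow> cpoly" where
  "monomial m = (\<lambda>x. if x = m then 1 else 0)"

definition var_coeffs :: "nat \<Rightarrow> nat \<Rightarrow> complex" where
  "var_coeffs j = (\<lambda>i. if i = j then 1 else 0)"

lemma linmult_var_monomial:
  assumes j: "j < n"
  shows "linmult n (var_coeffs j) (monomial m) = monomial (m(j := Suc (m j)))"
proof (rule ext)
  fix x
  have "linmult n (var_coeffs j) (monomial m) x
      = (\<Sum>i<n. if i = j then (if 0 < x i then monomial m (x(i := x i - 1)) else 0) else 0)"
    unfolding linmult_def by (rule sum.cong) (auto simp: var_coeffs_def)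
  also have "\<dots> = (if 0 < x j then monomial m (x(j := x j - 1)) else 0)"
    using j by (simp add: sum.delta)
  also have "\<dots> = monomial (m(j := Suc (m j))) x"
  proof (cases "0 < x j")
    case True
    hence "x(j := x j - 1) = m \<longleftrightarrow> x = m(j := Suc (m j))"
      by (auto simp: fun_eq_iff split: if_splits)
    thus ?thesis using True by (simp add: monomial_def)
  next
    case False
    hence "x \<noteq> m(j := Suc (m j))" by (metis fun_upd_same zero_less_Suc)
    thus ?thesis using False by (simp add: monomial_def)
  qed
  finally show "linmult n (var_coeffs j) (monomial m) x = monomial (m(j := Suc (m j))) x" .
qed

lemma funpow_linmult_var_monomial:
  "j < n \<Longrightarrow> (linmult n (var_coeffs j) ^^ k) (monomial m) = monomial (m(j := m j + k))"
  by (induction k) (auto simp: linmult_var_monomial)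

lemma foldr_linmult_var_pone:
  "(\<forall>j\<in>set xs. j < n) \<Longrightarrow> distinct xs \<Longrightarrow>
   foldr (\<lambda>j. linmult n (var_coeffs j) ^^ m j) xs pone = monomial (\<lambda>i. if i \<in> set xs then m i else 0)"
proof (induction xs)
  case Nil thus ?case by (simp add: pone_def monomial_def fun_eq_iff)
next
  case (Cons j xs)
  thus ?case by (auto simp: funpow_linmult_var_monomial intro!: arg_cong[where f = monomial])
qed

lemma foldr_linmult_in_linpow_span:
  "foldr (\<lambda>j. linmult n (c j) ^^ m j) xs pone \<in> linpow_span n (sum_list (map m xs))"
proof (induction xs)
  case Nil
  have "pone = linpow n (\<lambda>_. 0) 0" by simp
  thus ?case by (simp add: linpow_span_def V.span_base)
next
  case (Cons j xs)
  let ?L = "linmult n (c j) ^^ m j"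
  let ?e = "sum_list (map m xs)"
  have L: "clinear ?L" by (intro clinear_funpow clinear_linmult)
  have "?L (foldr (\<lambda>j. linmult n (c j) ^^ m j) xs pone) \<in> V.span (?L ` range (\<lambda>a. linpow n a ?e))"
    using Cons.IH unfolding linpow_span_def VV.linear_span_image[OF L] by blast
  also have "\<dots> \<subseteq> linpow_span n (?e + m j)"
    unfolding linpow_span_def
    by (intro V.span_minimal) (auto intro: linmult_funpow_linpow_in_span[unfolded linpow_span_def])
  finally show ?case by (simp add: add.commute)
qed

lemma monomial_in_linpow_span:
  assumes "\<forall>i\<ge>n. m i = 0"
  shows "monomial m \<in> linpow_span n (\<Sum>i<n. m i)"
proof -
  have "(\<lambda>i. if i \<in> set [0..<n] then m i else 0) = m"
    using assms by (auto simp: fun_eq_iff)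
  hence "foldr (\<lambda>j. linmult n (var_coeffs j) ^^ m j) [0..<n] pone = monomial m"
    using foldr_linmult_var_pone[of "[0..<n]" n m] by simp
  moreover have "sum_list (map m [0..<n]) = (\<Sum>i<n. m i)"
    by (simp add: sum_set_upt_conv_sum_list_nat[symmetric] atLeast0LessThan)
  ultimately show ?thesis
    using foldr_linmult_in_linpow_span[where n = n and c = var_coeffs and m = m and xs = "[0..<n]"]
    by simp
qed

lemma homog_in_linpow_span:
  assumes F: "homog n d F"
  shows "F \<in> linpow_span n d"
proof -
  have "F = (\<Sum>m\<in>supp F. cscale (F m) (monomial m))"
  proof (rule ext)
    fix x
    have "(\<Sum>m\<in>supp F. cscale (F m) (monomial m)) x = (\<Sum>m\<in>supp F. if x = m then F m else 0)"
      by (auto simp: fun_sum_apply cscale_apply monomial_def intro!: sum.cong)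
    also have "\<dots> = F x" using finite_supp_homog[OF F] by (simp add: sum.delta supp_def)
    finally show "F x = (\<Sum>m\<in>supp F. cscale (F m) (monomial m)) x" ..
  qed
  also have "\<dots> \<in> linpow_span n d" unfolding linpow_span_def
  proof (intro V.span_sum V.span_scale)
    fix m assume "m \<in> supp F"
    hence "\<forall>i\<ge>n. m i = 0" "(\<Sum>i<n. m i) = d" using F by (auto simp: homog_def is_poly_def)
    thus "monomial m \<in> V.span (range (\<lambda>a. linpow n a d))"
      using monomial_in_linpow_span[of n m] by (simp add: linpow_span_def)
  qed
  finally show ?thesis .
qed

lemma waring_decomposition_exists:
  assumes "homog n d F"
  shows "\<exists>(r::nat) c l. (\<forall>i<r. homog n 1 (l i)) \<and> F = (\<lambda>m. \<Sum>i<r. c i * ppow (l i) d m)"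
proof -
  have "F \<in> V.span (range (\<lambda>a. linpow n a d))"
    using homog_in_linpow_span[OF assms] by (simp add: linpow_span_def)
  then obtain t u where t: "finite t" "t \<subseteq> range (\<lambda>a. linpow n a d)"
      and F: "F = (\<Sum>v\<in>t. cscale (u v) v)"
    unfolding V.span_explicit by blast
  obtain h where h: "bij_betw h {..<card t} t"
    using ex_bij_betw_nat_finite[OF t(1)] by (auto simp: atLeast0LessThan)
  have "\<forall>v\<in>t. \<exists>a. v = linpow n a d" using t(2) by blast
  from bchoice[OF this] obtain A where A: "\<And>v. v \<in> t \<Longrightarrow> linpow n (A v) d = v"
    by metis
  define l where "l i = linmult n (A (h i)) pone" for i
  have "F = (\<lambda>m. \<Sum>i<card t. u (h i) * ppow (l i) d m)"
  proof (rule ext)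
    fix m
    have "F m = (\<Sum>v\<in>t. u v * v m)" unfolding F by (simp add: fun_sum_apply cscale_apply)
    also have "\<dots> = (\<Sum>i<card t. u (h i) * h i m)"
      by (rule sum.reindex_bij_betw[OF h, symmetric])
    also have "\<dots> = (\<Sum>i<card t. u (h i) * ppow (l i) d m)"
    proof (rule sum.cong[OF refl])
      fix i assume "i \<in> {..<card t}"
      hence "h i \<in> t" using h by (auto simp: bij_betw_def)
      thus "u (h i) * h i m = u (h i) * ppow (l i) d m" by (simp add: l_def ppow_linmult_pone A)
    qed
    finally show "F m = (\<Sum>i<card t. u (h i) * ppow (l i) d m)" .
  qed
  moreover have "\<forall>i<card t. homog n 1 (l i)" unfolding l_def using homog_linmult_pone by blast
  ultimately show ?thesis by (intro exI[of _ "card t"] exI[of _ "\<lambda>i. u (h i)"] exI[of _ l]) simp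
qed

section \<open>The apolar length bound\<close>

definition apolar_space :: "nat \<Rightarrow> cpoly \<Rightarrow> cpoly set" where
  "apolar_space n G = {apply_op n \<Theta> G | \<Theta>. is_poly n \<Theta>}"

lemma apolar_length_eq_dim: "apolar_length n G = V.dim (apolar_space n G)"
  by (simp add: apolar_length_def apolar_space_def)

lemma apolar_space_dirderiv: "apolar_space n (dirderiv n a G) = dirderiv n a ` apolar_space n G"
  by (auto simp: apolar_space_def apply_op_dirderiv_commute)

lemma diffmono_linpow: "\<exists>c j. j \<le> k \<and> diffmono n m (linpow n a k) = cscale c (linpow n a j)"
proof -
  define Q where "Q X \<longleftrightarrow> (\<exists>c j. j \<le> k \<and> X = cscale c (linpow n a j))" for X
  have pderiv: "Q (pderiv_i i X)" if "Q X" for i X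
  proof -
    obtain c j where cj: "j \<le> k" "X = cscale c (linpow n a j)" using \<open>Q X\<close> Q_def by blast
    have "pderiv_i i X = cscale (c * (of_nat j * (if i < n then a i else 0))) (linpow n a (j - 1))"
      by (simp add: cj(2) VV.linear_scale[OF clinear_pderiv_i] pderiv_i_linpow V.scale_scale)
    thus ?thesis unfolding Q_def using cj(1) by (meson diff_le_self le_trans)
  qed
  have "Q ((f ^^ t) X)" if "\<And>Y. Q Y \<Longrightarrow> Q (f Y)" "Q X" for f t X
    using that by (induction t) auto
  hence "Q (foldr (\<lambda>i. pderiv_i i ^^ m i) xs X)" if "Q X" for xs X
    using that by (induction xs) (auto intro: pderiv)
  moreover have "Q (linpow n a k)" unfolding Q_def by (metis V.scale_one order_refl)
  ultimately show ?thesis unfolding diffmono_def Q_def by blast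
qed

lemma apolar_space_linpow_sum_subset:
  "apolar_space n (\<Sum>i\<in>I. cscale (c i) (linpow n (a i) k))
     \<subseteq> V.span ((\<lambda>(i, j). linpow n (a i) j) ` (I \<times> {..k}))"
proof
  let ?S = "V.span ((\<lambda>(i, j). linpow n (a i) j) ` (I \<times> {..k}))"
  fix w assume "w \<in> apolar_space n (\<Sum>i\<in>I. cscale (c i) (linpow n (a i) k))"
  then obtain \<Theta> where w: "w = apply_op n \<Theta> (\<Sum>i\<in>I. cscale (c i) (linpow n (a i) k))"
    unfolding apolar_space_def by blast
  have "apply_op n \<Theta> (linpow n (a i) k) \<in> ?S" if i: "i \<in> I" for i
    unfolding apply_op_eq_sum
  proof (intro V.span_sum V.span_scale)
    fix m
    obtain e j where j: "j \<le> k" "diffmono n m (linpow n (a i) k) = cscale e (linpow n (a i) j)"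
      using diffmono_linpow by blast
    have "linpow n (a i) j \<in> ?S"
      using i j(1) by (intro V.span_base image_eqI[of _ _ "(i, j)"]) auto
    thus "diffmono n m (linpow n (a i) k) \<in> ?S" unfolding j(2) by (rule V.span_scale)
  qed
  thus "w \<in> ?S"
    unfolding w by (simp add: VV.linear_sum[OF clinear_apply_op] VV.linear_scale[OF clinear_apply_op]
        V.span_sum V.span_scale)
qed

lemma dim_apolar_space_le_dim_image_add:
  assumes F: "F = (\<Sum>i<r. cscale (c i) (linpow n (a i) d))"
  shows "V.dim (apolar_space n (dirderiv n b F))
           \<le> V.dim (dirderiv n b ` apolar_space n (dirderiv n b F)) + r"
proof -
  let ?D = "dirderiv n b"
  define s where "s i = (\<Sum>j<n. b j * a i j)" for i
  define I where "I = {i \<in> {..<r}. s i \<noteq> 0}"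
  define P where "P i k = linpow n (a i) k" for i k
  define B where "B = (\<lambda>(i, k). P i k) ` (I \<times> {..<d - 1})"
  define E where "E = (\<lambda>i. P i (d - 1)) ` I"
  have D: "clinear ?D" by (rule clinear_dirderiv)
  have DP: "?D (P i k) = cscale (of_nat k * s i) (P i (k - 1))" for i k
    by (simp add: P_def s_def dirderiv_linpow)
  have "?D F = (\<Sum>i<r. cscale (c i * (of_nat d * s i)) (P i (d - 1)))"
    by (simp add: F VV.linear_sum[OF D] VV.linear_scale[OF D] DP[unfolded P_def] P_def V.scale_scale)
  also have "\<dots> = (\<Sum>i\<in>I. cscale (c i * (of_nat d * s i)) (P i (d - 1)))"
    unfolding I_def by (rule sum.mono_neutral_right) (auto simp: V.scale_zero_left)
  finally have DF: "?D F = \<dots>" .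
  have "B \<union> E = (\<lambda>(i, k). P i k) ` (I \<times> {..d - 1})"
  proof
    show "B \<union> E \<subseteq> (\<lambda>(i, k). P i k) ` (I \<times> {..d - 1})"
      by (auto simp: B_def E_def)
    show "(\<lambda>(i, k). P i k) ` (I \<times> {..d - 1}) \<subseteq> B \<union> E"
      by (auto simp: B_def E_def le_less)
  qed
  hence W: "apolar_space n (?D F) \<subseteq> V.span (B \<union> E)"
    using apolar_space_linpow_sum_subset[where I = I and a = a and k = "d - 1"]
    unfolding DF P_def by simp
  have "B \<subseteq> ?D ` V.span (B \<union> E)"
  proof
    fix x assume "x \<in> B"
    then obtain i k where ik: "i \<in> I" "k < d - 1" "x = P i k" unfolding B_def by auto
    have "P i (Suc k) \<in> B \<union> E"
      using ik by (cases "Suc k = d - 1") (auto simp: B_def E_def)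
    hence "cscale (1 / (of_nat (Suc k) * s i)) (P i (Suc k)) \<in> V.span (B \<union> E)"
      by (intro V.span_scale V.span_base)
    moreover have "?D (cscale (1 / (of_nat (Suc k) * s i)) (P i (Suc k))) = x"
      using ik by (simp add: VV.linear_scale[OF D] DP V.scale_scale I_def del: of_nat_Suc)
    ultimately show "x \<in> ?D ` V.span (B \<union> E)" by blast
  qed
  hence "V.dim (apolar_space n (?D F)) \<le> V.dim (?D ` apolar_space n (?D F)) + card E"
    by (intro dim_le_dim_image_add_card[OF D _ _ W]) (simp_all add: B_def E_def I_def)
  moreover have "card E \<le> r"
    using card_image_le[of I "\<lambda>i. P i (d - 1)"] card_mono[of "{..<r}" I]
    unfolding E_def I_def by fastforce
  ultimately show ?thesis by linarith
qed

lemma ppow_sum_eq_linpow_sum: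
  assumes "\<forall>i<r. homog n 1 (l i)"
  shows "(\<lambda>m. \<Sum>i<r. c i * ppow (l i) d m) = (\<Sum>i<r. cscale (c i) (linpow n (lin_coeffs (l i)) d))"
proof (rule ext)
  fix m
  have "ppow (l i) d = linpow n (lin_coeffs (l i)) d" if "i < r" for i
    using assms that by (simp add: ppow_linear_form)
  thus "(\<Sum>i<r. c i * ppow (l i) d m) = (\<Sum>i<r. cscale (c i) (linpow n (lin_coeffs (l i)) d)) m"
    by (simp add: fun_sum_apply cscale_apply)
qed

lemma waring_rank_decomposition:
  assumes "homog n d F"
  obtains c l where "\<forall>i<waring_rank n d F. homog n 1 (l i)"
    and "F = (\<lambda>m. \<Sum>i<waring_rank n d F. c i * ppow (l i) d m)"
proof -
  have "\<exists>c l. (\<forall>i<waring_rank n d F. homog n 1 (l i))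
      \<and> F = (\<lambda>m. \<Sum>i<waring_rank n d F. c i * ppow (l i) d m)"
    unfolding waring_rank_def by (rule LeastI_ex) (rule waring_decomposition_exists[OF assms])
  with that show ?thesis by blast
qed

theorem mainTheorem5:
  fixes n d :: nat and F \<alpha> :: cpoly
  assumes "homog n d F"
    and "homog n 1 \<alpha>"
  shows "int (waring_rank n d F) \<ge>
           int (apolar_length n (apply_op n \<alpha> F))
         - int (apolar_length n (apply_op n (ppow \<alpha> 2) F))"
proof -
  let ?r = "waring_rank n d F" and ?D = "dirderiv n (lin_coeffs \<alpha>)"
  obtain c l where l: "\<forall>i<?r. homog n 1 (l i)" and F: "F = (\<lambda>m. \<Sum>i<?r. c i * ppow (l i) d m)"
    by (rule waring_rank_decomposition[OF assms(1)])
  have "F = (\<Sum>i<?r. cscale (c i) (linpow n (lin_coeffs (l i)) d))"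
    using F ppow_sum_eq_linpow_sum[OF l] by (rule trans)
  hence "V.dim (apolar_space n (?D F)) \<le> V.dim (?D ` apolar_space n (?D F)) + ?r"
    by (rule dim_apolar_space_le_dim_image_add)
  hence "apolar_length n (apply_op n \<alpha> F) \<le> apolar_length n (apply_op n (ppow \<alpha> 2) F) + ?r"
    unfolding apolar_length_eq_dim apply_op_linear_form[OF assms(2)]
      apply_op_linear_form_square[OF assms(2)] apolar_space_dirderiv .
  thus ?thesis by linarith
qed

end
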